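(* Suppose the functional $\tilde I[\tilde q]=\int_a^b\tilde L(x,\tilde q(x),\dot{\tilde q}(x))\,dx$ is invariant, in the sense (with transformation of the independent variable) described in the context, under the one-parameter group of infinitesimal transformations $\hat x=x+\epsilon\tau(x,\tilde q)+o(\epsilon)$, $\tilde{\hat q}(x)=\tilde q(x)+\epsilon\tilde\zeta(x,\tilde q)+o(\epsilon)$, for every fuzzy-valued function $\tilde q$ with $C^2$ level functions. For $r\in[0,1]$ define, with $\underline L^r,\overline L^r$ and their partial derivatives evaluated at $(x,\underline q^r,\overline q^r,\dot{\underline q}^r,\dot{\overline q}^r)$ and $\underline\zeta^r,\overline\zeta^r,\tau$ evaluated at $(x,\underline q^r,\overline q^r)$, $$\underline C^r=\partial_4\underline L^r\,\underline\zeta^r+\partial_5\underline L^r\,\overline\zeta^r+\big[\underline L^r-\partial_4\underline L^r\,\dot{\underline q}^r-\partial_5\underline L^r\,\dot{\overline q}^r\big]\tau,$$ $$\overline C^r=\partial_4\overline L^r\,\underline\zeta^r+\partial_5\overline L^r\,\overline\zeta^r+\big[\overline L^r-\partial_4\overline L^r\,\dot{\underline q}^r-\partial_5\overline L^r\,\dot{\overline q}^r\big]\tau.$$ Then the fuzzy quantity $\tilde C$ with these lower and upper bounds is conserved: for every $\tilde q$ with $C^2$ level functions satisfying the fuzzy Euler–Lagrange equations, $\frac{d}{dx}\underline C^r=\frac{d}{dx}\overline C^r=0$ for all $r\in[0,1]$.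
   Context: A fuzzy number is a map $\tilde a:\mathbb R\to[0,1]$ that is normal, fuzzy convex, upper semicontinuous and has compact support; its $r$-level sets are compact intervals $[\underline a^r,\overline a^r]$. A fuzzy-valued function $\tilde q$ on $[a,b]$ is described by its level functions $\underline q^r(x),\overline q^r(x)$, $r\in[0,1]$; dots denote derivatives with respect to the independent variable. The fuzzy Lagrangian is given levelwise by $C^2$ functions $\underline L^r,\overline L^r:[a,b]\times\mathbb R^4\to\mathbb R$ evaluated at $(x,\underline q^r,\overline q^r,\dot{\underline q}^r,\dot{\overline q}^r)$, and $\tilde I$ has level endpoints $\int_a^b\underline L^rdx$, $\int_a^b\overline L^rdx$. $\partial_i$ is the partial derivative with respect to the $i$-th argument of $(x,u,v,p,w)$. Fuzzy Euler–Lagrange equations: for all $r$, $\partial_2\underline L^r-\frac{d}{dx}\partial_4\underline L^r=0$, $\partial_3\underline L^r-\frac{d}{dx}\partial_5\underline L^r=0$, $\partial_2\overline L^r-\frac{d}{dx}\partial_4\overline L^r=0$, $\partial_3\overline L^r-\frac{d}{dx}\partial_5\overline L^r=0$. Transformations: $\tau:[a,b]\times\mathbb R^2\to\mathbb R$ and, for each $r$, $\underline\zeta^r,\overline\zeta^r:[a,b]\times\mathbb R^2\to\mathbb R$ are $C^1$. For $\epsilon>0$ and each $r$, the new independent variable is $\hat x(x)=x+\epsilon\tau(x,\underline q^r(x),\overline q^r(x))+o(\epsilon)$ and the transformed level functions are defined by $\underline{\hat q}^r(\hat x(x))=\underline q^r(x)+\epsilon\underline\zeta^r(x,\underline q^r(x),\overline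 q^r(x))+o(\epsilon)$, $\overline{\hat q}^r(\hat x(x))=\overline q^r(x)+\epsilon\overline\zeta^r(x,\underline q^r(x),\overline q^r(x))+o(\epsilon)$, with remainders $C^1$ and $o(\epsilon)$ together with their derivatives; $\dot{\underline{\hat q}}^r(\hat x)$ denotes the derivative with respect to $\hat x$. Invariance: for all $r\in[0,1]$, every $[t_a,t_b]\subseteq[a,b]$ and every $\epsilon>0$, $\int_{t_a}^{t_b}\underline L^r(x,\underline q^r(x),\overline q^r(x),\dot{\underline q}^r(x),\dot{\overline q}^r(x))dx=\int_{\hat x(t_a)}^{\hat x(t_b)}\underline L^r(\hat x,\underline{\hat q}^r(\hat x),\overline{\hat q}^r(\hat x),\dot{\underline{\hat q}}^r(\hat x),\dot{\overline{\hat q}}^r(\hat x))d\hat x$, and likewise for $\overline L^r$. *)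

theory Defs
  imports "HOL-Analysis.Analysis"
begin

type_synonym R3 = "real \<times> real \<times> real"
type_synonym R5 = "real \<times> real \<times> real \<times> real \<times> real"

definition usc :: "(real \<Rightarrow> real) \<Rightarrow> bool" where
  "usc u \<longleftrightarrow> (\<forall>t. \<forall>e>0. \<exists>d>0. \<forall>s. \<bar>s - t\<bar> < d \<longrightarrow> u s < u t + e)"

definition fuzzy_number :: "(real \<Rightarrow> real) \<Rightarrow> bool" where
  "fuzzy_number u \<longleftrightarrow>
     (\<forall>t. 0 \<le> u t \<and> u t \<le> 1) \<and>
     (\<exists>t. u t = 1) \<and>
     (\<forall>s t l. 0 \<le> l \<and> l \<le> 1 \<longrightarrow> min (u s) (u t) \<le> u (l * s + (1 - l) * t)) \<and>
     usc u \<and>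
     compact (closure {t. 0 < u t})"

definition flevel :: "(real \<Rightarrow> real) \<Rightarrow> real \<Rightarrow> real set" where
  "flevel u r = (if r = 0 then closure {t. 0 < u t} else {t. r \<le> u t})"

definition flower :: "(real \<Rightarrow> real) \<Rightarrow> real \<Rightarrow> real" where
  "flower u r = Inf (flevel u r)"

definition fupper :: "(real \<Rightarrow> real) \<Rightarrow> real \<Rightarrow> real" where
  "fupper u r = Sup (flevel u r)"

definition C1_within :: "'a::real_normed_vector set \<Rightarrow> ('a \<Rightarrow> 'b::real_normed_vector) \<Rightarrow> bool" where
  "C1_within S f \<longleftrightarrow>
     (\<exists>f'. (\<forall>z\<in>S. (f has_derivative blinfun_apply (f' z)) (at z within S)) \<and> continuous_on S f')"

definition C2_within :: "'a::real_normed_vector set \<Rightarrow> ('a \<Rightarrow> 'b::real_normed_vector) \<Rightarrow> bool" where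
  "C2_within S f \<longleftrightarrow>
     (\<exists>f'. (\<forall>z\<in>S. (f has_derivative blinfun_apply (f' z)) (at z within S)) \<and> C1_within S f')"

definition fuzzy_C2_fun :: "real \<Rightarrow> real \<Rightarrow> (real \<Rightarrow> real \<Rightarrow> real) \<Rightarrow> bool" where
  "fuzzy_C2_fun a b q \<longleftrightarrow>
     (\<forall>x\<in>{a..b}. fuzzy_number (q x)) \<and>
     (\<forall>r\<in>{0..1}. C2_within {a..b} (\<lambda>x. flower (q x) r) \<and> C2_within {a..b} (\<lambda>x. fupper (q x) r))"

definition dotx :: "real \<Rightarrow> real \<Rightarrow> (real \<Rightarrow> real) \<Rightarrow> real \<Rightarrow> real" where
  "dotx a b f x = vector_derivative f (at x within {a..b})"

definition pd2 :: "(R5 \<Rightarrow> real) \<Rightarrow> R5 \<Rightarrow> real" where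
  "pd2 L z = (case z of (x,u,v,p,w) \<Rightarrow> deriv (\<lambda>s. L (x,s,v,p,w)) u)"
definition pd3 :: "(R5 \<Rightarrow> real) \<Rightarrow> R5 \<Rightarrow> real" where
  "pd3 L z = (case z of (x,u,v,p,w) \<Rightarrow> deriv (\<lambda>s. L (x,u,s,p,w)) v)"
definition pd4 :: "(R5 \<Rightarrow> real) \<Rightarrow> R5 \<Rightarrow> real" where
  "pd4 L z = (case z of (x,u,v,p,w) \<Rightarrow> deriv (\<lambda>s. L (x,u,v,s,w)) p)"
definition pd5 :: "(R5 \<Rightarrow> real) \<Rightarrow> R5 \<Rightarrow> real" where
  "pd5 L z = (case z of (x,u,v,p,w) \<Rightarrow> deriv (\<lambda>s. L (x,u,v,p,s)) w)"

definition oint :: "real \<Rightarrow> real \<Rightarrow> (real \<Rightarrow> real) \<Rightarrow> real" where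
  "oint c d f = (if c \<le> d then integral {c..d} f else - integral {d..c} f)"

definition small_remainder :: "real \<Rightarrow> real \<Rightarrow> (real \<Rightarrow> real \<Rightarrow> real) \<Rightarrow> bool" where
  "small_remainder a b R \<longleftrightarrow>
     (\<forall>\<epsilon>>0. C1_within {a..b} (R \<epsilon>)) \<and>
     (\<forall>e>0. \<exists>d>0. \<forall>\<epsilon>. 0 < \<epsilon> \<and> \<epsilon> < d \<longrightarrow>
        (\<forall>x\<in>{a..b}. \<bar>R \<epsilon> x\<bar> \<le> e * \<epsilon> \<and> \<bar>vector_derivative (R \<epsilon>) (at x within {a..b})\<bar> \<le> e * \<epsilon>))"

definition invariant_at ::
  "real \<Rightarrow> real \<Rightarrow> (R5 \<Rightarrow> real) \<Rightarrow> (R3 \<Rightarrow> real) \<Rightarrow> (R3 \<Rightarrow> real) \<Rightarrow> (R3 \<Rightarrow> real)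
   \<Rightarrow> (real \<Rightarrow> real \<Rightarrow> real) \<Rightarrow> (real \<Rightarrow> real \<Rightarrow> real) \<Rightarrow> (real \<Rightarrow> real \<Rightarrow> real)
   \<Rightarrow> (real \<Rightarrow> real) \<Rightarrow> (real \<Rightarrow> real) \<Rightarrow> bool" where
  "invariant_at a b L tau zl zh Rx Rl Rh ql qh \<longleftrightarrow>
     (\<forall>ta tb \<epsilon>. a \<le> ta \<and> ta \<le> tb \<and> tb \<le> b \<and> 0 < \<epsilon> \<longrightarrow>
       (let X = (\<lambda>x. x + \<epsilon> * tau (x, ql x, qh x) + Rx \<epsilon> x) in
        \<forall>qhl qhh dqhl dqhh.
          (\<forall>x\<in>{a..b}. qhl (X x) = ql x + \<epsilon> * zl (x, ql x, qh x) + Rl \<epsilon> x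
                    \<and> qhh (X x) = qh x + \<epsilon> * zh (x, ql x, qh x) + Rh \<epsilon> x) \<and>
          (\<forall>y\<in>closed_segment (X ta) (X tb).
              (qhl has_real_derivative dqhl y) (at y within closed_segment (X ta) (X tb)) \<and>
              (qhh has_real_derivative dqhh y) (at y within closed_segment (X ta) (X tb)))
          \<longrightarrow>
          integral {ta..tb} (\<lambda>x. L (x, ql x, qh x, dotx a b ql x, dotx a b qh x))
          = oint (X ta) (X tb) (\<lambda>y. L (y, qhl y, qhh y, dqhl y, dqhh y))))"

definition EL_at :: "real \<Rightarrow> real \<Rightarrow> (R5 \<Rightarrow> real) \<Rightarrow> (real \<Rightarrow> real) \<Rightarrow> (real \<Rightarrow> real) \<Rightarrow> bool" where
  "EL_at a b L ql qh \<longleftrightarrow>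
     (\<forall>x\<in>{a..b}.
        pd2 L (x, ql x, qh x, dotx a b ql x, dotx a b qh x)
          - dotx a b (\<lambda>t. pd4 L (t, ql t, qh t, dotx a b ql t, dotx a b qh t)) x = 0 \<and>
        pd3 L (x, ql x, qh x, dotx a b ql x, dotx a b qh x)
          - dotx a b (\<lambda>t. pd5 L (t, ql t, qh t, dotx a b ql t, dotx a b qh t)) x = 0)"

definition noether_C ::
  "real \<Rightarrow> real \<Rightarrow> (R5 \<Rightarrow> real) \<Rightarrow> (R3 \<Rightarrow> real) \<Rightarrow> (R3 \<Rightarrow> real) \<Rightarrow> (R3 \<Rightarrow> real)
   \<Rightarrow> (real \<Rightarrow> real) \<Rightarrow> (real \<Rightarrow> real) \<Rightarrow> real \<Rightarrow> real" where
  "noether_C a b L tau zl zh ql qh x =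
     (let z = (x, ql x, qh x, dotx a b ql x, dotx a b qh x); y = (x, ql x, qh x) in
      pd4 L z * zl y + pd5 L z * zh y
      + (L z - pd4 L z * dotx a b ql x - pd5 L z * dotx a b qh x) * tau y)"

end

theory Submission
  imports Defs
begin

text \<open>Invariance on every subinterval, differentiated with respect to the upper limit of
  integration after the substitution y = X(x), gives a pointwise identity
  L(x, q, q') = L(X, Q, Q'/X') X' between the Lagrangian along q and along the transformed
  curve Q. Differentiating it in eps at eps = 0, where the o(eps) remainders and their
  derivatives contribute nothing, yields the infinitesimal invariance condition
  dL (tau, zeta, zeta' - q' tau') + L tau' = 0. Along a solution of the Euler--Lagrange
  equations its left-hand side is exactly the derivative of the Noether quantity C, so C' = 0
  in the interior of [a, b], and C is constant on [a, b] by continuity. The fuzzy theorem is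
  this argument applied to each endpoint Lagrangian at each level r.\<close>

section \<open>Derivatives on compact intervals\<close>

definition has_continuous_derivative_on ::
    "real set \<Rightarrow> (real \<Rightarrow> real) \<Rightarrow> (real \<Rightarrow> real) \<Rightarrow> bool" where
  "has_continuous_derivative_on S f f' \<longleftrightarrow>
     (\<forall>t\<in>S. (f has_real_derivative f' t) (at t within S)) \<and> continuous_on S f'"

lemma has_continuous_derivative_on_continuous_on:
  "has_continuous_derivative_on S f f' \<Longrightarrow> continuous_on S f"
  unfolding has_continuous_derivative_on_def by (metis DERIV_continuous_on)

lemma has_continuous_derivative_on_perturb:
  assumes "has_continuous_derivative_on S f f'" "has_continuous_derivative_on S g g'"
    "has_continuous_derivative_on S h h'"
  shows "has_continuous_derivative_on S (\<lambda>t. f t + c * g t + h t) (\<lambda>t. f' t + c * g' t + h' t)"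
proof -
  have "((\<lambda>t. f t + c * g t + h t) has_real_derivative f' t + c * g' t + h' t) (at t within S)"
    if "t \<in> S" for t
    using assms that unfolding has_continuous_derivative_on_def by (intro DERIV_add DERIV_cmult) auto
  moreover have "continuous_on S (\<lambda>t. f' t + c * g' t + h' t)"
    using assms unfolding has_continuous_derivative_on_def by (intro continuous_intros) auto
  ultimately show ?thesis unfolding has_continuous_derivative_on_def by blast
qed

lemma blinfun_apply_real: "blinfun_apply (F :: real \<Rightarrow>\<^sub>L real) = (*) (F 1)"
proof
  fix h show "blinfun_apply F h = F 1 * h"
    using blinfun.scaleR_right[of F h 1] by simp
qed

lemma has_real_derivative_blinfun:
  assumes "(f has_derivative blinfun_apply F) net"
  shows "(f has_real_derivative F 1) net"
  using assms unfolding has_field_derivative_def by (simp only: blinfun_apply_real[symmetric])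

lemma has_real_derivative_compose_blinfun:
  assumes "(g has_derivative blinfun_apply G) (at (p t) within S)"
    and "p ` s \<subseteq> S"
    and "(p has_vector_derivative p') (at t within s)"
  shows "((\<lambda>x. g (p x)) has_real_derivative G p') (at t within s)"
proof -
  have "((\<lambda>x. g (p x)) has_derivative (\<lambda>h. G (h *\<^sub>R p'))) (at t within s)"
    using has_derivative_in_compose[OF assms(3)[unfolded has_vector_derivative_def]
        has_derivative_subset[OF assms(1,2)]] .
  moreover have "(\<lambda>h. G (h *\<^sub>R p')) = (*) (G p')"
    by (rule ext) (simp add: blinfun.scaleR_right)
  ultimately show ?thesis unfolding has_field_derivative_def by simp
qed

lemma dotx_eqI:
  assumes "a < b" "t \<in> {a..b}" "(f has_real_derivative D) (at t within {a..b})"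
  shows "dotx a b f t = D"
  using vector_derivative_within_cbox[of a b t f D] assms
  unfolding has_real_derivative_iff_has_vector_derivative cbox_interval dotx_def by blast

lemma C1_within_Icc_has_continuous_derivative:
  fixes f :: "real \<Rightarrow> real"
  assumes ab: "a < b" and "C1_within {a..b} f"
  shows "has_continuous_derivative_on {a..b} f (dotx a b f)"
proof -
  obtain f' where d: "\<forall>t\<in>{a..b}. (f has_derivative blinfun_apply (f' t)) (at t within {a..b})"
    and c: "continuous_on {a..b} f'" using assms(2) unfolding C1_within_def by blast
  have d': "(f has_real_derivative f' t 1) (at t within {a..b})" if "t \<in> {a..b}" for t
    using d that has_real_derivative_blinfun by blast
  have e: "dotx a b f t = f' t 1" if "t \<in> {a..b}" for t
    using dotx_eqI[OF ab that d'[OF that]] .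
  have "continuous_on {a..b} (\<lambda>t. f' t 1)"
    by (intro blinfun.continuous_on c continuous_on_const)
  then have "continuous_on {a..b} (dotx a b f)"
    by (rule continuous_on_eq) (simp add: e)
  with d' e show ?thesis unfolding has_continuous_derivative_on_def by simp
qed

lemma C2_within_imp_C1_within:
  assumes "C2_within S f"
  shows "C1_within S f"
proof -
  obtain f' where d: "\<forall>z\<in>S. (f has_derivative blinfun_apply (f' z)) (at z within S)"
    and "C1_within S f'" using assms unfolding C2_within_def by blast
  then obtain f'' where "\<forall>z\<in>S. (f' has_derivative blinfun_apply (f'' z)) (at z within S)"
    unfolding C1_within_def by blast
  then have "continuous_on S f'" by (intro has_derivative_continuous_on) auto
  with d show ?thesis unfolding C1_within_def by blast
qed

lemma C2_within_Icc_dotx_has_derivative: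
  fixes f :: "real \<Rightarrow> real"
  assumes ab: "a < b" and "C2_within {a..b} f"
  obtains f2 where "\<forall>t\<in>{a..b}. (dotx a b f has_real_derivative f2 t) (at t within {a..b})"
proof -
  obtain f' where d: "\<forall>t\<in>{a..b}. (f has_derivative blinfun_apply (f' t)) (at t within {a..b})"
    and "C1_within {a..b} f'" using assms(2) unfolding C2_within_def by blast
  then obtain f'' where
    d2: "\<forall>t\<in>{a..b}. (f' has_derivative blinfun_apply (f'' t)) (at t within {a..b})"
    unfolding C1_within_def by blast
  have dotx_f: "dotx a b f s = f' s 1" if "s \<in> {a..b}" for s
    using dotx_eqI[OF ab that has_real_derivative_blinfun[OF d[rule_format, OF that]]] .
  have "\<exists>D. (dotx a b f has_real_derivative D) (at t within {a..b})" if t: "t \<in> {a..b}" for t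
  proof -
    have "(\<lambda>s. f' s 1) differentiable (at t within {a..b})"
      using blinfun.FDERIV[OF d2[rule_format, OF t] has_derivative_const]
      unfolding differentiable_def by blast
    then obtain D where "((\<lambda>s. f' s 1) has_real_derivative D) (at t within {a..b})"
      unfolding real_differentiable_def by blast
    then have "(dotx a b f has_real_derivative D) (at t within {a..b})"
      by (rule has_field_derivative_transform_within[OF _ zero_less_one t]) (simp add: dotx_f)
    then show ?thesis ..
  qed
  then show ?thesis using that by metis
qed

lemma C1_within_compose_graph:
  fixes g :: "R3 \<Rightarrow> real" and u v u' v' :: "real \<Rightarrow> real"
  assumes ab: "a < b" and "C1_within ({a..b} \<times> UNIV) g"
    and u: "has_continuous_derivative_on {a..b} u u'"
    and v: "has_continuous_derivative_on {a..b} v v'"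
  shows "has_continuous_derivative_on {a..b} (\<lambda>t. g (t, u t, v t)) (dotx a b (\<lambda>t. g (t, u t, v t)))"
proof -
  obtain G where
    dG: "\<forall>z\<in>{a..b} \<times> UNIV. (g has_derivative blinfun_apply (G z)) (at z within {a..b} \<times> UNIV)"
    and Gc: "continuous_on ({a..b} \<times> UNIV) G" using assms(2) unfolding C1_within_def by blast
  define p where "p t = (t, u t, v t)" for t
  have pS: "p ` {a..b} \<subseteq> {a..b} \<times> UNIV" unfolding p_def by auto
  have du: "(u has_vector_derivative u' t) (at t within {a..b})"
    and dv: "(v has_vector_derivative v' t) (at t within {a..b})" if "t \<in> {a..b}" for t
    using u v that
    unfolding has_continuous_derivative_on_def has_real_derivative_iff_has_vector_derivative by blast+
  have "(p has_vector_derivative (1, u' t, v' t)) (at t within {a..b})" if "t \<in> {a..b}" for t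
    unfolding p_def by (intro has_vector_derivative_Pair has_vector_derivative_id du dv that)
  then have d: "((\<lambda>t. g (p t)) has_real_derivative G (p t) (1, u' t, v' t)) (at t within {a..b})"
    if "t \<in> {a..b}" for t
    using has_real_derivative_compose_blinfun[OF dG[rule_format] pS] that pS by blast
  have e: "dotx a b (\<lambda>t. g (p t)) t = G (p t) (1, u' t, v' t)" if "t \<in> {a..b}" for t
    using dotx_eqI[OF ab that d[OF that]] .
  have pc: "continuous_on {a..b} p"
    unfolding p_def using u v by (intro continuous_intros has_continuous_derivative_on_continuous_on)
  have "continuous_on {a..b} u'" "continuous_on {a..b} v'"
    using u v unfolding has_continuous_derivative_on_def by blast+
  then have "continuous_on {a..b} (\<lambda>t. G (p t) (1, u' t, v' t))"
    by (intro blinfun.continuous_on continuous_on_compose2[OF Gc pc pS] continuous_intros)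
  then have "continuous_on {a..b} (dotx a b (\<lambda>t. g (p t)))"
    by (rule continuous_on_eq) (simp add: e)
  with d e have "has_continuous_derivative_on {a..b} (\<lambda>t. g (p t)) (dotx a b (\<lambda>t. g (p t)))"
    unfolding has_continuous_derivative_on_def by simp
  then show ?thesis unfolding p_def .
qed

lemma blinfun_apply_R5:
  fixes G :: "R5 \<Rightarrow>\<^sub>L real"
  shows "G (a1, a2, a3, a4, a5) = a1 * G (1,0,0,0,0) + a2 * G (0,1,0,0,0) + a3 * G (0,0,1,0,0)
           + a4 * G (0,0,0,1,0) + a5 * G (0,0,0,0,1)"
proof -
  have "(a1, a2, a3, a4, a5) = a1 *\<^sub>R (1,0,0,0,0) + a2 *\<^sub>R (0,1,0,0,0) + a3 *\<^sub>R (0,0,1,0,0)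
           + a4 *\<^sub>R (0,0,0,1,0) + a5 *\<^sub>R (0,0,0,0,1::real)" by simp
  then show ?thesis by (simp only: blinfun.add_right blinfun.scaleR_right real_scaleR_def)
qed

lemma pd_eq_blinfun_apply:
  fixes L :: "R5 \<Rightarrow> real" and G :: "R5 \<Rightarrow>\<^sub>L real"
  assumes dL: "(L has_derivative blinfun_apply G) (at z within {a..b} \<times> UNIV)"
    and z: "z \<in> {a..b} \<times> UNIV"
  shows "pd2 L z = G (0,1,0,0,0)" "pd3 L z = G (0,0,1,0,0)"
    "pd4 L z = G (0,0,0,1,0)" "pd5 L z = G (0,0,0,0,1)"
proof -
  obtain x y1 y2 y3 y4 where ze: "z = (x, y1, y2, y3, y4)" by (cases z) auto
  have x: "x \<in> {a..b}" using z ze by auto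
  have "((\<lambda>s. L (x, s, y2, y3, y4)) has_real_derivative G (0,1,0,0,0)) (at y1)"
    by (rule has_real_derivative_compose_blinfun[where p="\<lambda>s. (x, s, y2, y3, y4)", OF dL[unfolded ze]])
       (use x in \<open>auto intro!: derivative_eq_intros simp: zero_prod_def\<close>)
  then show "pd2 L z = G (0,1,0,0,0)" unfolding pd2_def ze by (simp add: DERIV_imp_deriv)
  have "((\<lambda>s. L (x, y1, s, y3, y4)) has_real_derivative G (0,0,1,0,0)) (at y2)"
    by (rule has_real_derivative_compose_blinfun[where p="\<lambda>s. (x, y1, s, y3, y4)", OF dL[unfolded ze]])
       (use x in \<open>auto intro!: derivative_eq_intros simp: zero_prod_def\<close>)
  then show "pd3 L z = G (0,0,1,0,0)" unfolding pd3_def ze by (simp add: DERIV_imp_deriv)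
  have "((\<lambda>s. L (x, y1, y2, s, y4)) has_real_derivative G (0,0,0,1,0)) (at y3)"
    by (rule has_real_derivative_compose_blinfun[where p="\<lambda>s. (x, y1, y2, s, y4)", OF dL[unfolded ze]])
       (use x in \<open>auto intro!: derivative_eq_intros simp: zero_prod_def\<close>)
  then show "pd4 L z = G (0,0,0,1,0)" unfolding pd4_def ze by (simp add: DERIV_imp_deriv)
  have "((\<lambda>s. L (x, y1, y2, y3, s)) has_real_derivative G (0,0,0,0,1)) (at y4)"
    by (rule has_real_derivative_compose_blinfun[where p="\<lambda>s. (x, y1, y2, y3, s)", OF dL[unfolded ze]])
       (use x in \<open>auto intro!: derivative_eq_intros simp: zero_prod_def\<close>)
  then show "pd5 L z = G (0,0,0,0,1)" unfolding pd5_def ze by (simp add: DERIV_imp_deriv)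
qed

section \<open>Change of the independent variable\<close>

lemma integral_reparametrisation_pointwise:
  fixes F G X :: "real \<Rightarrow> real"
  assumes x0: "ta < x0" "x0 < t1"
    and F: "continuous_on {ta..t1} F" and G: "continuous_on {X ta..X t1} G"
    and XS: "X ` {ta..t1} \<subseteq> {X ta..X t1}"
    and dX: "(X has_real_derivative X1) (at x0 within {ta..t1})"
    and eq: "\<And>t. t \<in> {ta..t1} \<Longrightarrow> integral {ta..t} F = integral {X ta..X t} G"
  shows "F x0 = G (X x0) * X1"
proof -
  have x0i: "x0 \<in> {ta..t1}" using x0 by auto
  have dF: "((\<lambda>t. integral {ta..t} F) has_real_derivative F x0) (at x0 within {ta..t1})"
    using integral_has_vector_derivative[OF F x0i] has_real_derivative_iff_has_vector_derivative
    by blast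
  have "X x0 \<in> {X ta..X t1}" using XS x0i by blast
  then have dG: "((\<lambda>s. integral {X ta..s} G) has_real_derivative G (X x0))
      (at (X x0) within {X ta..X t1})"
    using integral_has_vector_derivative[OF G] has_real_derivative_iff_has_vector_derivative by blast
  have "((\<lambda>s. integral {X ta..s} G) \<circ> X has_real_derivative G (X x0) * X1) (at x0 within {ta..t1})"
    by (rule DERIV_image_chain[OF has_field_derivative_subset[OF dG XS] dX])
  then have "((\<lambda>t. integral {ta..t} F) has_real_derivative G (X x0) * X1) (at x0 within {ta..t1})"
    by (rule has_field_derivative_transform_within[OF _ zero_less_one x0i]) (simp add: eq)
  moreover have "at x0 within {ta..t1} = at x0" using x0 by (intro at_within_Icc_at) auto
  ultimately show ?thesis using dF DERIV_unique by metis
qed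

lemma pos_derivative_imp_strict_mono_on_Icc:
  fixes X X1 :: "real \<Rightarrow> real"
  assumes dX: "\<forall>t\<in>{a..b}. (X has_real_derivative X1 t) (at t within {a..b})"
    and pos: "\<forall>t\<in>{a..b}. X1 t > 0"
  shows "strict_mono_on {a..b} X"
proof (rule strict_mono_onI)
  fix s t assume st: "s \<in> {a..b}" "t \<in> {a..b}" "s < t"
  show "X s < X t"
  proof (rule DERIV_pos_imp_increasing_open[OF \<open>s < t\<close>])
    fix y assume "s < y" "y < t"
    with st have y: "a < y" "y < b" by auto
    then have "at y within {a..b} = at y" by (rule at_within_Icc_at)
    with dX pos y show "\<exists>D. DERIV X y :> D \<and> D > 0" by (metis atLeastAtMost_iff less_imp_le)
  next
    have "continuous_on {a..b} X" using dX by (intro DERIV_continuous_on) auto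
    then show "continuous_on {s..t} X" by (rule continuous_on_subset) (use st in auto)
  qed
qed

lemma pos_derivative_inverse_on_Icc:
  fixes X X1 :: "real \<Rightarrow> real"
  assumes ab: "a < b" and X: "has_continuous_derivative_on {a..b} X X1"
    and pos: "\<forall>t\<in>{a..b}. X1 t > 0"
  obtains g where "\<And>t. t \<in> {a..b} \<Longrightarrow> g (X t) = t"
    and "\<And>y. y \<in> {X a..X b} \<Longrightarrow> g y \<in> {a..b} \<and> X (g y) = y"
    and "continuous_on {X a..X b} g"
    and "\<And>f f' y. has_continuous_derivative_on {a..b} f f' \<Longrightarrow> y \<in> {X a<..<X b} \<Longrightarrow>
           ((\<lambda>y. f (g y)) has_real_derivative f' (g y) / X1 (g y)) (at y)"
proof
  define g where "g = inv_into {a..b} X"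
  have dX: "\<forall>t\<in>{a..b}. (X has_real_derivative X1 t) (at t within {a..b})"
    using X unfolding has_continuous_derivative_on_def by blast
  have mono: "strict_mono_on {a..b} X" using pos_derivative_imp_strict_mono_on_Icc[OF dX pos] .
  have Xc: "continuous_on {a..b} X" using has_continuous_derivative_on_continuous_on[OF X] .
  show gX: "g (X t) = t" if "t \<in> {a..b}" for t
    unfolding g_def using strict_mono_on_imp_inj_on[OF mono] that by simp
  have image: "X ` {a..b} = {X a..X b}"
  proof
    show "X ` {a..b} \<subseteq> {X a..X b}"
      using strict_mono_on_leD[OF mono] ab by auto
    show "{X a..X b} \<subseteq> X ` {a..b}"
      using IVT'[of X a _ b] Xc ab by fastforce
  qed
  show Xg: "g y \<in> {a..b} \<and> X (g y) = y" if "y \<in> {X a..X b}" for y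
    using that gX unfolding image[symmetric] by auto
  show gc: "continuous_on {X a..X b} g"
    using continuous_on_inv[OF Xc compact_Icc] gX image by metis
  fix f f' y
  assume f: "has_continuous_derivative_on {a..b} f f'" and y: "y \<in> {X a<..<X b}"
  then have gy: "g y \<in> {a..b}" "X (g y) = y" using Xg by auto
  then have "g y \<noteq> a" "g y \<noteq> b" using y by auto
  with gy have at: "at (g y) within {a..b} = at (g y)" by (intro at_within_Icc_at) auto
  have "DERIV X (g y) :> X1 (g y)" using dX gy at by metis
  moreover have "isCont g y"
    using continuous_on_interior[OF gc] y by simp
  moreover have "X1 (g y) \<noteq> 0" using pos gy by fastforce
  ultimately have "DERIV g y :> inverse (X1 (g y))"
    using y Xg by (intro DERIV_inverse_function[where f=X and a="X a" and b="X b"]) auto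
  moreover have "DERIV f (g y) :> f' (g y)"
    using f gy at unfolding has_continuous_derivative_on_def by metis
  ultimately show "((\<lambda>y. f (g y)) has_real_derivative f' (g y) / X1 (g y)) (at y)"
    using DERIV_chain2 by (metis divide_inverse)
qed

text \<open>The transported curve is (A, B) composed with the inverse of X.\<close>
lemma transported_curve:
  fixes X X1 A A1 B B1 :: "real \<Rightarrow> real"
  assumes ab: "a < b" and X: "has_continuous_derivative_on {a..b} X X1"
    and X1pos: "\<forall>t\<in>{a..b}. X1 t > 0"
    and A: "has_continuous_derivative_on {a..b} A A1"
    and B: "has_continuous_derivative_on {a..b} B B1"
  obtains qhl qhh dqhl dqhh where
    "\<And>t. t \<in> {a..b} \<Longrightarrow> qhl (X t) = A t \<and> qhh (X t) = B t
                           \<and> dqhl (X t) = A1 t / X1 t \<and> dqhh (X t) = B1 t / X1 t"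
    and "\<And>y. y \<in> {X a<..<X b} \<Longrightarrow>
           (qhl has_real_derivative dqhl y) (at y) \<and> (qhh has_real_derivative dqhh y) (at y)"
    and "continuous_on {X a..X b} (\<lambda>y. (qhl y, qhh y, dqhl y, dqhh y))"
proof -
  obtain g where gX: "\<And>t. t \<in> {a..b} \<Longrightarrow> g (X t) = t"
    and Xg: "\<And>y. y \<in> {X a..X b} \<Longrightarrow> g y \<in> {a..b} \<and> X (g y) = y"
    and gc: "continuous_on {X a..X b} g"
    and transport: "\<And>f f' y. has_continuous_derivative_on {a..b} f f' \<Longrightarrow> y \<in> {X a<..<X b} \<Longrightarrow>
           ((\<lambda>y. f (g y)) has_real_derivative f' (g y) / X1 (g y)) (at y)"
    using pos_derivative_inverse_on_Icc[OF ab X X1pos] by blast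
  have cg: "continuous_on {X a..X b} (\<lambda>y. f (g y))" if "continuous_on {a..b} f" for f
    by (rule continuous_on_compose2[OF that gc]) (use Xg in auto)
  have "continuous_on {a..b} A" "continuous_on {a..b} B" "continuous_on {a..b} A1"
    "continuous_on {a..b} B1" "continuous_on {a..b} X1"
    using A B X has_continuous_derivative_on_continuous_on
    unfolding has_continuous_derivative_on_def by blast+
  moreover have "\<forall>y\<in>{X a..X b}. X1 (g y) \<noteq> 0" using X1pos Xg by fastforce
  ultimately have "continuous_on {X a..X b}
      (\<lambda>y. (A (g y), B (g y), A1 (g y) / X1 (g y), B1 (g y) / X1 (g y)))"
    by (intro continuous_intros cg) auto
  with gX transport[OF A] transport[OF B] show ?thesis
    by (intro that[of "\<lambda>y. A (g y)" "\<lambda>y. B (g y)" "\<lambda>y. A1 (g y) / X1 (g y)" "\<lambda>y. B1 (g y) / X1 (g y)"])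
       auto
qed

lemma invariance_imp_pointwise:
  fixes L :: "R5 \<Rightarrow> real" and F X X1 A A1 B B1 :: "real \<Rightarrow> real"
  assumes ab: "a < b" and tt: "a < ta" "ta < x0" "x0 < t1" "t1 < b"
    and Lc: "continuous_on ({a..b} \<times> UNIV) L" and Fc: "continuous_on {a..b} F"
    and X: "has_continuous_derivative_on {a..b} X X1" and X1pos: "\<forall>t\<in>{a..b}. X1 t > 0"
    and A: "has_continuous_derivative_on {a..b} A A1"
    and B: "has_continuous_derivative_on {a..b} B B1"
    and Xin: "a \<le> X ta" "X t1 \<le> b"
    and H: "\<And>tb qhl qhh dqhl dqhh. ta \<le> tb \<Longrightarrow> tb \<le> t1 \<Longrightarrow>
          \<forall>x\<in>{a..b}. qhl (X x) = A x \<and> qhh (X x) = B x \<Longrightarrow>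
          \<forall>y\<in>closed_segment (X ta) (X tb).
              (qhl has_real_derivative dqhl y) (at y within closed_segment (X ta) (X tb)) \<and>
              (qhh has_real_derivative dqhh y) (at y within closed_segment (X ta) (X tb)) \<Longrightarrow>
          integral {ta..tb} F = oint (X ta) (X tb) (\<lambda>y. L (y, qhl y, qhh y, dqhl y, dqhh y))"
  shows "F x0 = L (X x0, A x0, B x0, A1 x0 / X1 x0, B1 x0 / X1 x0) * X1 x0"
proof -
  obtain qhl qhh dqhl dqhh where
    Xq: "\<And>t. t \<in> {a..b} \<Longrightarrow> qhl (X t) = A t \<and> qhh (X t) = B t
                           \<and> dqhl (X t) = A1 t / X1 t \<and> dqhh (X t) = B1 t / X1 t"
    and dq: "\<And>y. y \<in> {X a<..<X b} \<Longrightarrow>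
           (qhl has_real_derivative dqhl y) (at y) \<and> (qhh has_real_derivative dqhh y) (at y)"
    and qc: "continuous_on {X a..X b} (\<lambda>y. (qhl y, qhh y, dqhl y, dqhh y))"
    using transported_curve[OF ab X X1pos A B] by blast
  have dX: "\<forall>t\<in>{a..b}. (X has_real_derivative X1 t) (at t within {a..b})"
    using X unfolding has_continuous_derivative_on_def by blast
  have mono: "strict_mono_on {a..b} X" using pos_derivative_imp_strict_mono_on_Icc[OF dX X1pos] .
  have Xle: "X s \<le> X t" if "s \<in> {a..b}" "t \<in> {a..b}" "s \<le> t" for s t
    using strict_mono_on_leD[OF mono that] .
  have Xrange: "X a < X ta" "X t1 < X b" using strict_mono_onD[OF mono] tt by auto
  define G where "G y = L (y, qhl y, qhh y, dqhl y, dqhh y)" for y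
  have eq: "integral {ta..t} F = integral {X ta..X t} G" if t: "t \<in> {ta..t1}" for t
  proof -
    have le: "X ta \<le> X t" "X t \<le> X t1" using Xle tt t by auto
    then have seg: "closed_segment (X ta) (X t) = {X ta..X t}"
      by (simp add: closed_segment_eq_real_ivl)
    have "integral {ta..t} F = oint (X ta) (X t) G"
      unfolding G_def
    proof (rule H)
      show "\<forall>x\<in>{a..b}. qhl (X x) = A x \<and> qhh (X x) = B x" using Xq by simp
      show "\<forall>y\<in>closed_segment (X ta) (X t).
          (qhl has_real_derivative dqhl y) (at y within closed_segment (X ta) (X t)) \<and>
          (qhh has_real_derivative dqhh y) (at y within closed_segment (X ta) (X t))"
        using dq seg le Xrange by (auto intro: has_field_derivative_at_within)
    qed (use t in auto)
    then show ?thesis unfolding oint_def using le by simp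
  qed
  have "continuous_on {X ta..X t1} (\<lambda>y. (qhl y, qhh y, dqhl y, dqhh y))"
    by (rule continuous_on_subset[OF qc]) (use Xrange in auto)
  from continuous_on_Pair[OF continuous_on_id this]
  have Gc: "continuous_on {X ta..X t1} G"
    unfolding G_def by (rule continuous_on_compose2[OF Lc]) (use Xin in auto)
  have "F x0 = G (X x0) * X1 x0"
  proof (rule integral_reparametrisation_pointwise[OF tt(2,3) _ Gc _ _ eq])
    show "continuous_on {ta..t1} F" by (rule continuous_on_subset[OF Fc]) (use tt in auto)
    show "X ` {ta..t1} \<subseteq> {X ta..X t1}" using Xle tt by auto
    show "(X has_real_derivative X1 x0) (at x0 within {ta..t1})"
      by (rule has_field_derivative_subset[where s="{a..b}"]) (use dX tt in auto)
  qed
  then show ?thesis unfolding G_def using Xq tt by simp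
qed

section \<open>Infinitesimal invariance\<close>

lemma invariant_atD:
  assumes "invariant_at a b L tau zl zh Rx Rl Rh u v"
    and "a \<le> ta" "ta \<le> tb" "tb \<le> b" "0 < \<epsilon>"
    and "X = (\<lambda>x. x + \<epsilon> * tau (x, u x, v x) + Rx \<epsilon> x)"
    and "\<forall>x\<in>{a..b}. qhl (X x) = u x + \<epsilon> * zl (x, u x, v x) + Rl \<epsilon> x
                  \<and> qhh (X x) = v x + \<epsilon> * zh (x, u x, v x) + Rh \<epsilon> x"
    and "\<forall>y\<in>closed_segment (X ta) (X tb).
            (qhl has_real_derivative dqhl y) (at y within closed_segment (X ta) (X tb)) \<and>
            (qhh has_real_derivative dqhh y) (at y within closed_segment (X ta) (X tb))"
  shows "integral {ta..tb} (\<lambda>x. L (x, u x, v x, dotx a b u x, dotx a b v x))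
           = oint (X ta) (X tb) (\<lambda>y. L (y, qhl y, qhh y, dqhl y, dqhh y))"
  using assms unfolding invariant_at_def Let_def by blast

text \<open>The remainders are only constrained for eps > 0, hence the extension by 0 at eps = 0.\<close>
lemma little_o_at_right_has_derivative_0:
  fixes f :: "real \<Rightarrow> real"
  assumes "\<forall>e>0. \<exists>d>0. \<forall>\<epsilon>. 0 < \<epsilon> \<and> \<epsilon> < d \<longrightarrow> \<bar>f \<epsilon>\<bar> \<le> e * \<epsilon>"
  shows "((\<lambda>\<epsilon>. if \<epsilon> > 0 then f \<epsilon> else 0) has_real_derivative 0) (at 0 within {0..})"
proof -
  have "((\<lambda>\<epsilon>. (if \<epsilon> > 0 then f \<epsilon> else 0) / \<epsilon>) \<longlongrightarrow> 0) (at_right 0)"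
  proof (rule tendstoI)
    fix e :: real assume "e > 0"
    then obtain d where d: "d > 0" "\<forall>\<epsilon>. 0 < \<epsilon> \<and> \<epsilon> < d \<longrightarrow> \<bar>f \<epsilon>\<bar> \<le> e/2 * \<epsilon>"
      using assms[rule_format, of "e/2"] by auto
    show "\<forall>\<^sub>F \<epsilon> in at_right 0. dist ((if \<epsilon> > 0 then f \<epsilon> else 0) / \<epsilon>) 0 < e"
      using eventually_at_right_real[OF d(1)]
    proof (rule eventually_mono)
      fix \<epsilon> assume \<epsilon>: "\<epsilon> \<in> {0<..<d}"
      then have "\<bar>f \<epsilon>\<bar> / \<epsilon> \<le> e/2" using d by (simp add: divide_le_eq mult.commute)
      moreover have "dist ((if \<epsilon> > 0 then f \<epsilon> else 0) / \<epsilon>) 0 = \<bar>f \<epsilon>\<bar> / \<epsilon>"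
        using \<epsilon> by (simp add: dist_real_def abs_divide)
      ultimately show "dist ((if \<epsilon> > 0 then f \<epsilon> else 0) / \<epsilon>) 0 < e"
        using \<open>e > 0\<close> by linarith
    qed
  qed
  then show ?thesis unfolding has_field_derivative_iff at_within_Ici_at_right by simp
qed

lemma eventually_const_at_right_derivative_0:
  fixes f :: "real \<Rightarrow> real"
  assumes df: "(f has_real_derivative D) (at 0 within {0..})"
    and const: "\<exists>d>0. \<forall>\<epsilon>. 0 < \<epsilon> \<and> \<epsilon> < d \<longrightarrow> f \<epsilon> = f 0"
  shows "D = 0"
proof -
  have lim: "((\<lambda>\<epsilon>. (f \<epsilon> - f 0) / (\<epsilon> - 0)) \<longlongrightarrow> D) (at_right 0)"
    using df unfolding has_field_derivative_iff at_within_Ici_at_right .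
  obtain d where d: "d > 0" "\<forall>\<epsilon>. 0 < \<epsilon> \<and> \<epsilon> < d \<longrightarrow> f \<epsilon> = f 0" using const by blast
  have ev: "\<forall>\<^sub>F \<epsilon> in at_right 0. 0 = (f \<epsilon> - f 0) / (\<epsilon> - 0)"
    using eventually_at_right_real[OF d(1)] by (rule eventually_mono) (use d in auto)
  have "((\<lambda>\<epsilon>. (f \<epsilon> - f 0) / (\<epsilon> - 0)) \<longlongrightarrow> 0) (at_right 0)"
    using tendsto_cong[OF ev] tendsto_const by blast
  then show ?thesis using tendsto_unique[OF _ lim] by simp
qed

lemma small_remainder_has_continuous_derivative:
  assumes "a < b" "small_remainder a b R" "0 < \<epsilon>"
  shows "has_continuous_derivative_on {a..b} (R \<epsilon>) (dotx a b (R \<epsilon>))"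
  using assms C1_within_Icc_has_continuous_derivative unfolding small_remainder_def by blast

lemma small_remainder_at_0:
  assumes "small_remainder a b R" "x \<in> {a..b}"
  shows "((\<lambda>\<epsilon>. if \<epsilon> > 0 then R \<epsilon> x else 0) has_real_derivative 0) (at 0 within {0..})"
    and "((\<lambda>\<epsilon>. if \<epsilon> > 0 then dotx a b (R \<epsilon>) x else 0) has_real_derivative 0) (at 0 within {0..})"
  using assms unfolding small_remainder_def dotx_def
  by (intro little_o_at_right_has_derivative_0; meson)+

lemma perturbed_identity_bounds:
  fixes T T1 :: "real \<Rightarrow> real" and Rx :: "real \<Rightarrow> real \<Rightarrow> real"
  assumes Tc: "continuous_on {a..b} T" and T1c: "continuous_on {a..b} T1"
    and Rx: "small_remainder a b Rx" and tt: "a < ta" "ta \<le> t1" "t1 < b"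
  obtains \<epsilon>0 where "\<epsilon>0 > 0"
    and "\<And>\<epsilon> t. 0 < \<epsilon> \<Longrightarrow> \<epsilon> < \<epsilon>0 \<Longrightarrow> t \<in> {a..b} \<Longrightarrow> 1 + \<epsilon> * T1 t + dotx a b (Rx \<epsilon>) t > 0"
    and "\<And>\<epsilon>. 0 < \<epsilon> \<Longrightarrow> \<epsilon> < \<epsilon>0 \<Longrightarrow> a \<le> ta + \<epsilon> * T ta + Rx \<epsilon> ta"
    and "\<And>\<epsilon>. 0 < \<epsilon> \<Longrightarrow> \<epsilon> < \<epsilon>0 \<Longrightarrow> t1 + \<epsilon> * T t1 + Rx \<epsilon> t1 \<le> b"
proof -
  obtain M0 where M0: "M0 > 0" "\<forall>t\<in>{a..b}. \<bar>T t\<bar> \<le> M0"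
    using compact_imp_bounded[OF compact_continuous_image[OF Tc compact_Icc]]
    unfolding bounded_pos by auto
  obtain M1 where M1: "M1 > 0" "\<forall>t\<in>{a..b}. \<bar>T1 t\<bar> \<le> M1"
    using compact_imp_bounded[OF compact_continuous_image[OF T1c compact_Icc]]
    unfolding bounded_pos by auto
  obtain d where d: "d > 0" "\<forall>\<epsilon>. 0 < \<epsilon> \<and> \<epsilon> < d \<longrightarrow>
        (\<forall>t\<in>{a..b}. \<bar>Rx \<epsilon> t\<bar> \<le> 1/4 * \<epsilon> \<and> \<bar>dotx a b (Rx \<epsilon>) t\<bar> \<le> 1/4 * \<epsilon>)"
    using Rx unfolding small_remainder_def dotx_def by (metis zero_less_divide_1_iff zero_less_numeral)
  define \<delta> where "\<delta> = min (ta - a) (b - t1)"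
  define \<epsilon>0 where "\<epsilon>0 = min d (min (1 / (4 * (M1 + 1))) (\<delta> / (2 * (M0 + 1))))"
  have small: "\<bar>Rx \<epsilon> t\<bar> \<le> \<epsilon> / 4" "\<bar>dotx a b (Rx \<epsilon>) t\<bar> \<le> \<epsilon> / 4"
    "\<bar>\<epsilon> * T t\<bar> \<le> \<epsilon> * M0" "\<bar>\<epsilon> * T1 t\<bar> \<le> \<epsilon> * M1"
    "\<epsilon> * M1 + \<epsilon> < 1/4" "\<epsilon> * M0 + \<epsilon> < \<delta> / 2"
    if "0 < \<epsilon>" "\<epsilon> < \<epsilon>0" "t \<in> {a..b}" for \<epsilon> t
  proof -
    have "\<epsilon> < d" "\<epsilon> * (4 * (M1 + 1)) < 1" "\<epsilon> * (2 * (M0 + 1)) < \<delta>"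
      using that M0 M1 unfolding \<epsilon>0_def by (auto simp: less_divide_eq)
    then show "\<bar>Rx \<epsilon> t\<bar> \<le> \<epsilon> / 4" "\<bar>dotx a b (Rx \<epsilon>) t\<bar> \<le> \<epsilon> / 4"
      "\<epsilon> * M1 + \<epsilon> < 1/4" "\<epsilon> * M0 + \<epsilon> < \<delta> / 2"
      using d that by (auto simp: algebra_simps)
    show "\<bar>\<epsilon> * T t\<bar> \<le> \<epsilon> * M0" "\<bar>\<epsilon> * T1 t\<bar> \<le> \<epsilon> * M1"
      using M0 M1 that by (auto simp: abs_mult mult_left_mono)
  qed
  show thesis
  proof
    show "\<epsilon>0 > 0" using d M0 M1 tt unfolding \<epsilon>0_def \<delta>_def by auto
  next
    fix \<epsilon> t assume "0 < \<epsilon>" "\<epsilon> < \<epsilon>0" "t \<in> {a..b}"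
    from small[OF this] show "1 + \<epsilon> * T1 t + dotx a b (Rx \<epsilon>) t > 0" by (auto simp: abs_le_iff)
  next
    fix \<epsilon> assume e: "0 < \<epsilon>" "\<epsilon> < \<epsilon>0"
    have I: "ta \<in> {a..b}" "t1 \<in> {a..b}" and \<delta>: "\<delta> \<le> ta - a" "\<delta> \<le> b - t1"
      using tt unfolding \<delta>_def by auto
    show "a \<le> ta + \<epsilon> * T ta + Rx \<epsilon> ta"
      using small[OF e I(1)] \<delta> e unfolding abs_le_iff by linarith
    show "t1 + \<epsilon> * T t1 + Rx \<epsilon> t1 \<le> b"
      using small[OF e I(2)] \<delta> e unfolding abs_le_iff by linarith
  qed
qed

text \<open>The right-hand side of the hypothesis, as a function of eps, is constant for small eps > 0;
  the claimed expression is its right derivative at eps = 0.\<close>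
lemma first_variation_zero:
  fixes L :: "R5 \<Rightarrow> real" and G :: "R5 \<Rightarrow>\<^sub>L real" and rx rl rh sx sl sh :: "real \<Rightarrow> real"
  assumes dL: "(L has_derivative blinfun_apply G) (at (x, u, v, p, w))"
    and r: "\<And>r. r \<in> {rx, rl, rh, sx, sl, sh} \<Longrightarrow>
              ((\<lambda>\<epsilon>. if \<epsilon> > 0 then r \<epsilon> else 0) has_real_derivative 0) (at 0 within {0..})"
    and const: "\<exists>\<epsilon>0>0. \<forall>\<epsilon>. 0 < \<epsilon> \<and> \<epsilon> < \<epsilon>0 \<longrightarrow> L (x, u, v, p, w) =
       L (x + \<epsilon> * T + rx \<epsilon>, u + \<epsilon> * Zl + rl \<epsilon>, v + \<epsilon> * Zh + rh \<epsilon>,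
          (p + \<epsilon> * Zl' + sl \<epsilon>) / (1 + \<epsilon> * T' + sx \<epsilon>), (w + \<epsilon> * Zh' + sh \<epsilon>) / (1 + \<epsilon> * T' + sx \<epsilon>))
       * (1 + \<epsilon> * T' + sx \<epsilon>)"
  shows "G (T, Zl, Zh, Zl' - p * T', Zh' - w * T') + L (x, u, v, p, w) * T' = 0"
proof -
  define ext where "ext r \<epsilon> = (if \<epsilon> > 0 then r \<epsilon> else 0)" for r :: "real \<Rightarrow> real" and \<epsilon> :: real
  have r0: "ext r 0 = 0" for r unfolding ext_def by simp
  have dr: "(ext rx has_real_derivative 0) (at 0 within {0..})"
    "(ext rl has_real_derivative 0) (at 0 within {0..})"
    "(ext rh has_real_derivative 0) (at 0 within {0..})"
    "(ext sx has_real_derivative 0) (at 0 within {0..})"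
    "(ext sl has_real_derivative 0) (at 0 within {0..})"
    "(ext sh has_real_derivative 0) (at 0 within {0..})"
    using r unfolding ext_def by auto
  define P where "P \<epsilon> = (x + \<epsilon> * T + ext rx \<epsilon>, u + \<epsilon> * Zl + ext rl \<epsilon>, v + \<epsilon> * Zh + ext rh \<epsilon>,
       (p + \<epsilon> * Zl' + ext sl \<epsilon>) / (1 + \<epsilon> * T' + ext sx \<epsilon>),
       (w + \<epsilon> * Zh' + ext sh \<epsilon>) / (1 + \<epsilon> * T' + ext sx \<epsilon>))" for \<epsilon>
  have P0: "P 0 = (x, u, v, p, w)" unfolding P_def r0 by simp
  have "((\<lambda>\<epsilon>. x + \<epsilon> * T + ext rx \<epsilon>) has_real_derivative T) (at 0 within {0..})"
    "((\<lambda>\<epsilon>. u + \<epsilon> * Zl + ext rl \<epsilon>) has_real_derivative Zl) (at 0 within {0..})"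
    "((\<lambda>\<epsilon>. v + \<epsilon> * Zh + ext rh \<epsilon>) has_real_derivative Zh) (at 0 within {0..})"
    by (rule derivative_eq_intros dr | simp)+
  moreover have "((\<lambda>\<epsilon>. (p + \<epsilon> * Zl' + ext sl \<epsilon>) / (1 + \<epsilon> * T' + ext sx \<epsilon>)) has_real_derivative
      Zl' - p * T') (at 0 within {0..})"
    "((\<lambda>\<epsilon>. (w + \<epsilon> * Zh' + ext sh \<epsilon>) / (1 + \<epsilon> * T' + ext sx \<epsilon>)) has_real_derivative
      Zh' - w * T') (at 0 within {0..})"
    by (rule derivative_eq_intros dr | simp add: r0)+
  ultimately have
    "(P has_vector_derivative (T, Zl, Zh, Zl' - p * T', Zh' - w * T')) (at 0 within {0..})"
    unfolding P_def has_real_derivative_iff_has_vector_derivative by (intro has_vector_derivative_Pair)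
  then have dLP: "((\<lambda>\<epsilon>. L (P \<epsilon>)) has_real_derivative G (T, Zl, Zh, Zl' - p * T', Zh' - w * T'))
      (at 0 within {0..})"
    using has_real_derivative_compose_blinfun[where S=UNIV] dL P0 by (metis subset_UNIV)
  have "((\<lambda>\<epsilon>. L (P \<epsilon>) * (1 + \<epsilon> * T' + ext sx \<epsilon>)) has_real_derivative
      G (T, Zl, Zh, Zl' - p * T', Zh' - w * T') + L (x, u, v, p, w) * T') (at 0 within {0..})"
    by (rule derivative_eq_intros dLP dr | simp add: r0 P0)+
  moreover have "\<exists>d>0. \<forall>\<epsilon>. 0 < \<epsilon> \<and> \<epsilon> < d \<longrightarrow>
      L (P \<epsilon>) * (1 + \<epsilon> * T' + ext sx \<epsilon>) = L (P 0) * (1 + 0 * T' + ext sx 0)"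
    using const unfolding P0 r0 by (elim exE) (auto simp: P_def ext_def)
  ultimately show ?thesis by (rule eventually_const_at_right_derivative_0)
qed

lemma invariant_at_pointwise:
  fixes L :: "R5 \<Rightarrow> real" and tau zl zh :: "R3 \<Rightarrow> real" and u v :: "real \<Rightarrow> real"
  defines "T \<equiv> \<lambda>t. tau (t, u t, v t)" and "Zl \<equiv> \<lambda>t. zl (t, u t, v t)" and "Zh \<equiv> \<lambda>t. zh (t, u t, v t)"
  assumes ab: "a < b" and Lc: "continuous_on ({a..b} \<times> UNIV) L"
    and tau: "C1_within ({a..b} \<times> UNIV) tau" and zl: "C1_within ({a..b} \<times> UNIV) zl"
    and zh: "C1_within ({a..b} \<times> UNIV) zh"
    and u: "C1_within {a..b} u" and v: "C1_within {a..b} v"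
    and Rx: "small_remainder a b Rx" and Rl: "small_remainder a b Rl" and Rh: "small_remainder a b Rh"
    and inv: "invariant_at a b L tau zl zh Rx Rl Rh u v"
    and tt: "a < ta" "ta < x0" "x0 < t1" "t1 < b" and \<epsilon>: "0 < \<epsilon>"
    and X1pos: "\<forall>t\<in>{a..b}. 1 + \<epsilon> * dotx a b T t + dotx a b (Rx \<epsilon>) t > 0"
    and Xin: "a \<le> ta + \<epsilon> * T ta + Rx \<epsilon> ta" "t1 + \<epsilon> * T t1 + Rx \<epsilon> t1 \<le> b"
  shows "L (x0, u x0, v x0, dotx a b u x0, dotx a b v x0)
    = L (x0 + \<epsilon> * T x0 + Rx \<epsilon> x0, u x0 + \<epsilon> * Zl x0 + Rl \<epsilon> x0, v x0 + \<epsilon> * Zh x0 + Rh \<epsilon> x0,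
         (dotx a b u x0 + \<epsilon> * dotx a b Zl x0 + dotx a b (Rl \<epsilon>) x0)
           / (1 + \<epsilon> * dotx a b T x0 + dotx a b (Rx \<epsilon>) x0),
         (dotx a b v x0 + \<epsilon> * dotx a b Zh x0 + dotx a b (Rh \<epsilon>) x0)
           / (1 + \<epsilon> * dotx a b T x0 + dotx a b (Rx \<epsilon>) x0))
      * (1 + \<epsilon> * dotx a b T x0 + dotx a b (Rx \<epsilon>) x0)"
proof -
  have du: "has_continuous_derivative_on {a..b} u (dotx a b u)"
    and dv: "has_continuous_derivative_on {a..b} v (dotx a b v)"
    using C1_within_Icc_has_continuous_derivative[OF ab] u v by blast+
  have dT: "has_continuous_derivative_on {a..b} T (dotx a b T)"
    unfolding T_def by (rule C1_within_compose_graph[OF ab tau du dv])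
  have dZl: "has_continuous_derivative_on {a..b} Zl (dotx a b Zl)"
    unfolding Zl_def by (rule C1_within_compose_graph[OF ab zl du dv])
  have dZh: "has_continuous_derivative_on {a..b} Zh (dotx a b Zh)"
    unfolding Zh_def by (rule C1_within_compose_graph[OF ab zh du dv])
  have did: "has_continuous_derivative_on {a..b} (\<lambda>t. t) (\<lambda>t. 1)"
    unfolding has_continuous_derivative_on_def by (auto intro: DERIV_ident continuous_on_const)
  note perturb = has_continuous_derivative_on_perturb[where c=\<epsilon>]
  note dR = small_remainder_has_continuous_derivative[OF ab _ \<epsilon>]
  have Fc: "continuous_on {a..b} (\<lambda>x. L (x, u x, v x, dotx a b u x, dotx a b v x))"
    using du dv has_continuous_derivative_on_continuous_on[OF du]
      has_continuous_derivative_on_continuous_on[OF dv]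
    unfolding has_continuous_derivative_on_def
    by (intro continuous_on_compose2[OF Lc] continuous_intros) auto
  show ?thesis
    by (rule invariance_imp_pointwise[OF ab tt Lc Fc perturb[OF did dT dR[OF Rx]] X1pos
          perturb[OF du dZl dR[OF Rl]] perturb[OF dv dZh dR[OF Rh]] Xin],
        rule invariant_atD[OF inv, where X="\<lambda>x. x + \<epsilon> * T x + Rx \<epsilon> x"])
       (use tt \<epsilon> in \<open>auto simp: T_def Zl_def Zh_def\<close>)
qed

lemma invariant_at_pointwise_near_0:
  fixes a b x0 :: real and L :: "R5 \<Rightarrow> real" and tau zl zh :: "R3 \<Rightarrow> real" and u v :: "real \<Rightarrow> real"
  defines "T \<equiv> \<lambda>t. tau (t, u t, v t)" and "Zl \<equiv> \<lambda>t. zl (t, u t, v t)" and "Zh \<equiv> \<lambda>t. zh (t, u t, v t)"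
  assumes ab: "a < b" and Lc: "continuous_on ({a..b} \<times> UNIV) L"
    and tau: "C1_within ({a..b} \<times> UNIV) tau" and zl: "C1_within ({a..b} \<times> UNIV) zl"
    and zh: "C1_within ({a..b} \<times> UNIV) zh"
    and u: "C1_within {a..b} u" and v: "C1_within {a..b} v"
    and Rx: "small_remainder a b Rx" and Rl: "small_remainder a b Rl" and Rh: "small_remainder a b Rh"
    and inv: "invariant_at a b L tau zl zh Rx Rl Rh u v"
    and x0: "a < x0" "x0 < b"
  shows "\<exists>\<epsilon>0>0. \<forall>\<epsilon>. 0 < \<epsilon> \<and> \<epsilon> < \<epsilon>0 \<longrightarrow> L (x0, u x0, v x0, dotx a b u x0, dotx a b v x0)
    = L (x0 + \<epsilon> * T x0 + Rx \<epsilon> x0, u x0 + \<epsilon> * Zl x0 + Rl \<epsilon> x0, v x0 + \<epsilon> * Zh x0 + Rh \<epsilon> x0,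
         (dotx a b u x0 + \<epsilon> * dotx a b Zl x0 + dotx a b (Rl \<epsilon>) x0)
           / (1 + \<epsilon> * dotx a b T x0 + dotx a b (Rx \<epsilon>) x0),
         (dotx a b v x0 + \<epsilon> * dotx a b Zh x0 + dotx a b (Rh \<epsilon>) x0)
           / (1 + \<epsilon> * dotx a b T x0 + dotx a b (Rx \<epsilon>) x0))
      * (1 + \<epsilon> * dotx a b T x0 + dotx a b (Rx \<epsilon>) x0)"
proof -
  define ta t1 where "ta = (a + x0) / 2" and "t1 = (x0 + b) / 2"
  have tt: "a < ta" "ta < x0" "x0 < t1" "t1 < b" using x0 unfolding ta_def t1_def by auto
  have "has_continuous_derivative_on {a..b} T (dotx a b T)"
    unfolding T_def using C1_within_Icc_has_continuous_derivative[OF ab] u v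
    by (intro C1_within_compose_graph[OF ab tau])
  then have "continuous_on {a..b} T" "continuous_on {a..b} (dotx a b T)"
    using has_continuous_derivative_on_continuous_on
    unfolding has_continuous_derivative_on_def by blast+
  then obtain \<epsilon>0 where \<epsilon>0: "\<epsilon>0 > 0"
    and X1pos: "\<And>\<epsilon> t. 0 < \<epsilon> \<Longrightarrow> \<epsilon> < \<epsilon>0 \<Longrightarrow> t \<in> {a..b} \<Longrightarrow> 1 + \<epsilon> * dotx a b T t + dotx a b (Rx \<epsilon>) t > 0"
    and Xin: "\<And>\<epsilon>. 0 < \<epsilon> \<Longrightarrow> \<epsilon> < \<epsilon>0 \<Longrightarrow> a \<le> ta + \<epsilon> * T ta + Rx \<epsilon> ta"
      "\<And>\<epsilon>. 0 < \<epsilon> \<Longrightarrow> \<epsilon> < \<epsilon>0 \<Longrightarrow> t1 + \<epsilon> * T t1 + Rx \<epsilon> t1 \<le> b"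
    using perturbed_identity_bounds[OF _ _ Rx, of T "dotx a b T" ta t1] tt by auto
  show ?thesis (is "\<exists>\<epsilon>0>0. \<forall>\<epsilon>. _ \<longrightarrow> ?identity \<epsilon>")
  proof (intro exI[of _ \<epsilon>0] conjI allI impI \<epsilon>0)
    fix \<epsilon> assume "0 < \<epsilon> \<and> \<epsilon> < \<epsilon>0"
    then have \<epsilon>: "0 < \<epsilon>" "\<epsilon> < \<epsilon>0" by auto
    have "\<forall>t\<in>{a..b}. 1 + \<epsilon> * dotx a b T t + dotx a b (Rx \<epsilon>) t > 0" using X1pos[OF \<epsilon>] by blast
    from invariant_at_pointwise[OF ab Lc tau zl zh u v Rx Rl Rh inv tt \<epsilon>(1)
        this[unfolded T_def] Xin[OF \<epsilon>, unfolded T_def]]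
    show "?identity \<epsilon>" unfolding T_def Zl_def Zh_def .
  qed
qed

lemma infinitesimal_invariance:
  fixes a b x0 :: real and L :: "R5 \<Rightarrow> real" and L' :: "R5 \<Rightarrow> R5 \<Rightarrow>\<^sub>L real"
    and tau zl zh :: "R3 \<Rightarrow> real" and u v :: "real \<Rightarrow> real"
  defines "T \<equiv> \<lambda>t. tau (t, u t, v t)" and "Zl \<equiv> \<lambda>t. zl (t, u t, v t)" and "Zh \<equiv> \<lambda>t. zh (t, u t, v t)"
    and "z \<equiv> (x0, u x0, v x0, dotx a b u x0, dotx a b v x0)"
  assumes ab: "a < b"
    and dL: "\<forall>p\<in>{a..b} \<times> UNIV. (L has_derivative blinfun_apply (L' p)) (at p within {a..b} \<times> UNIV)"
    and tau: "C1_within ({a..b} \<times> UNIV) tau" and zl: "C1_within ({a..b} \<times> UNIV) zl"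
    and zh: "C1_within ({a..b} \<times> UNIV) zh"
    and u: "C1_within {a..b} u" and v: "C1_within {a..b} v"
    and Rx: "small_remainder a b Rx" and Rl: "small_remainder a b Rl" and Rh: "small_remainder a b Rh"
    and inv: "invariant_at a b L tau zl zh Rx Rl Rh u v"
    and x0: "a < x0" "x0 < b"
  shows "L' z (T x0, Zl x0, Zh x0, dotx a b Zl x0 - dotx a b u x0 * dotx a b T x0,
                dotx a b Zh x0 - dotx a b v x0 * dotx a b T x0)
         + L z * dotx a b T x0 = 0"
proof -
  have Lc: "continuous_on ({a..b} \<times> UNIV) L"
    using dL by (intro has_derivative_continuous_on[of _ _ "\<lambda>p. blinfun_apply (L' p)"]) blast
  have z: "z \<in> interior ({a..b} \<times> UNIV)" using x0 unfolding z_def interior_Times by auto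
  then have "at z within {a..b} \<times> UNIV = at z" by (rule at_within_interior)
  moreover have "z \<in> {a..b} \<times> UNIV" using z interior_subset by blast
  ultimately have dLz: "(L has_derivative blinfun_apply (L' z)) (at z)" using dL by metis
  have r: "((\<lambda>\<epsilon>. if \<epsilon> > 0 then r \<epsilon> else 0) has_real_derivative 0) (at 0 within {0..})"
    if "r \<in> {\<lambda>\<epsilon>. Rx \<epsilon> x0, \<lambda>\<epsilon>. Rl \<epsilon> x0, \<lambda>\<epsilon>. Rh \<epsilon> x0,
             \<lambda>\<epsilon>. dotx a b (Rx \<epsilon>) x0, \<lambda>\<epsilon>. dotx a b (Rl \<epsilon>) x0, \<lambda>\<epsilon>. dotx a b (Rh \<epsilon>) x0}" for r
    using that small_remainder_at_0[OF Rx] small_remainder_at_0[OF Rl] small_remainder_at_0[OF Rh] x0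
    by auto
  show ?thesis
    unfolding z_def T_def Zl_def Zh_def
    by (rule first_variation_zero[OF dLz[unfolded z_def] r
          invariant_at_pointwise_near_0[OF ab Lc tau zl zh u v Rx Rl Rh inv x0]])
qed

section \<open>Conservation of the Noether quantity\<close>

lemma euler_lagrange_momentum_derivative:
  fixes a b :: real and L :: "R5 \<Rightarrow> real" and L' :: "R5 \<Rightarrow> R5 \<Rightarrow>\<^sub>L real"
    and L'' :: "R5 \<Rightarrow> R5 \<Rightarrow>\<^sub>L R5 \<Rightarrow>\<^sub>L real" and u v :: "real \<Rightarrow> real" and q' :: R5
  defines "q \<equiv> \<lambda>t. (t, u t, v t, dotx a b u t, dotx a b v t)"
  assumes ab: "a < b"
    and dL: "\<forall>p\<in>{a..b} \<times> UNIV. (L has_derivative blinfun_apply (L' p)) (at p within {a..b} \<times> UNIV)"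
    and dL': "\<forall>p\<in>{a..b} \<times> UNIV. (L' has_derivative blinfun_apply (L'' p)) (at p within {a..b} \<times> UNIV)"
    and dq: "(q has_vector_derivative q') (at t within {a..b})"
    and EL: "EL_at a b L u v" and t: "t \<in> {a..b}"
  shows "((\<lambda>s. pd4 L (q s)) has_real_derivative pd2 L (q t)) (at t within {a..b})"
    and "((\<lambda>s. pd5 L (q s)) has_real_derivative pd3 L (q t)) (at t within {a..b})"
proof -
  have qs: "q s \<in> {a..b} \<times> UNIV" if "s \<in> {a..b}" for s using that unfolding q_def by auto
  then have qS: "q ` {a..b} \<subseteq> {a..b} \<times> UNIV" by blast
  have momentum: "(P has_real_derivative dotx a b P t) (at t within {a..b})"
    if P: "\<And>s. s \<in> {a..b} \<Longrightarrow> P s = L' (q s) e" for P e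
  proof -
    have "((\<lambda>s. L' (q s)) has_derivative (\<lambda>h. L'' (q t) (h *\<^sub>R q'))) (at t within {a..b})"
      by (rule has_derivative_in_compose2[OF dL'[rule_format] qS t
            dq[unfolded has_vector_derivative_def]])
    from blinfun.FDERIV[OF this has_derivative_const[of e]]
    have "(\<lambda>s. L' (q s) e) differentiable (at t within {a..b})"
      unfolding differentiable_def by blast
    then obtain D where "((\<lambda>s. L' (q s) e) has_real_derivative D) (at t within {a..b})"
      unfolding real_differentiable_def by blast
    then have "(P has_real_derivative D) (at t within {a..b})"
      by (rule has_field_derivative_transform_within[OF _ zero_less_one t]) (simp add: P)
    then show ?thesis using dotx_eqI[OF ab t] by simp
  qed
  have pd: "pd4 L (q s) = L' (q s) (0,0,0,1,0)" "pd5 L (q s) = L' (q s) (0,0,0,0,1)"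
    if "s \<in> {a..b}" for s
    using pd_eq_blinfun_apply[OF dL[rule_format, OF qs[OF that]] qs[OF that]] by auto
  have "pd2 L (q t) = dotx a b (\<lambda>s. pd4 L (q s)) t" "pd3 L (q t) = dotx a b (\<lambda>s. pd5 L (q s)) t"
    using EL t unfolding EL_at_def q_def by auto
  then show "((\<lambda>s. pd4 L (q s)) has_real_derivative pd2 L (q t)) (at t within {a..b})"
    "((\<lambda>s. pd5 L (q s)) has_real_derivative pd3 L (q t)) (at t within {a..b})"
    using momentum[of "\<lambda>s. pd4 L (q s)"] momentum[of "\<lambda>s. pd5 L (q s)"] pd by auto
qed

lemma C2_within_Icc_jet_derivative:
  fixes u v :: "real \<Rightarrow> real"
  assumes ab: "a < b" and u: "C2_within {a..b} u" and v: "C2_within {a..b} v"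
  obtains u2 v2 where
    "\<forall>t\<in>{a..b}. (dotx a b u has_real_derivative u2 t) (at t within {a..b})"
    and "\<forall>t\<in>{a..b}. (dotx a b v has_real_derivative v2 t) (at t within {a..b})"
    and "\<And>t. t \<in> {a..b} \<Longrightarrow> ((\<lambda>t. (t, u t, v t, dotx a b u t, dotx a b v t)) has_vector_derivative
           (1, dotx a b u t, dotx a b v t, u2 t, v2 t)) (at t within {a..b})"
proof -
  have "has_continuous_derivative_on {a..b} u (dotx a b u)"
    "has_continuous_derivative_on {a..b} v (dotx a b v)"
    using C1_within_Icc_has_continuous_derivative[OF ab] C2_within_imp_C1_within u v by blast+
  then have du: "\<forall>t\<in>{a..b}. (u has_real_derivative dotx a b u t) (at t within {a..b})"
    and dv: "\<forall>t\<in>{a..b}. (v has_real_derivative dotx a b v t) (at t within {a..b})"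
    unfolding has_continuous_derivative_on_def by blast+
  obtain u2 where du1: "\<forall>t\<in>{a..b}. (dotx a b u has_real_derivative u2 t) (at t within {a..b})"
    using C2_within_Icc_dotx_has_derivative[OF ab u] by blast
  obtain v2 where dv1: "\<forall>t\<in>{a..b}. (dotx a b v has_real_derivative v2 t) (at t within {a..b})"
    using C2_within_Icc_dotx_has_derivative[OF ab v] by blast
  show ?thesis
  proof (rule that[OF du1 dv1])
    fix t assume "t \<in> {a..b}"
    with du dv du1 dv1 show "((\<lambda>t. (t, u t, v t, dotx a b u t, dotx a b v t)) has_vector_derivative
        (1, dotx a b u t, dotx a b v t, u2 t, v2 t)) (at t within {a..b})"
      by (intro has_vector_derivative_Pair has_vector_derivative_id)
         (auto simp: has_real_derivative_iff_has_vector_derivative[symmetric])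
  qed
qed

text \<open>The left-hand side is the derivative of the Noether quantity by the product rule, with
  the Euler--Lagrange equations already substituted for the derivatives of the momenta.\<close>
lemma noether_derivative_identity:
  fixes G :: "R5 \<Rightarrow>\<^sub>L real"
  assumes "P2 = G (0,1,0,0,0)" "P3 = G (0,0,1,0,0)" "P4 = G (0,0,0,1,0)" "P5 = G (0,0,0,0,1)"
  shows "P2 * Zl + Zl' * P4 + (P3 * Zh + Zh' * P5)
           + ((G (1, p, w, p', w') - (P2 * p + p' * P4) - (P3 * w + w' * P5)) * T
              + T' * (L - P4 * p - P5 * w))
         = G (T, Zl, Zh, Zl' - p * T', Zh' - w * T') + L * T'"
  using assms unfolding blinfun_apply_R5[of G 1 p w p' w']
    blinfun_apply_R5[of G T Zl Zh "Zl' - p * T'" "Zh' - w * T'"]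
  by (simp add: algebra_simps)

lemma noether_C_has_derivative:
  fixes a b :: real and L :: "R5 \<Rightarrow> real" and L' :: "R5 \<Rightarrow> R5 \<Rightarrow>\<^sub>L real"
    and L'' :: "R5 \<Rightarrow> R5 \<Rightarrow>\<^sub>L R5 \<Rightarrow>\<^sub>L real" and tau zl zh :: "R3 \<Rightarrow> real" and u v :: "real \<Rightarrow> real"
  defines "T \<equiv> \<lambda>t. tau (t, u t, v t)" and "Zl \<equiv> \<lambda>t. zl (t, u t, v t)" and "Zh \<equiv> \<lambda>t. zh (t, u t, v t)"
    and "q \<equiv> \<lambda>t. (t, u t, v t, dotx a b u t, dotx a b v t)"
  assumes ab: "a < b"
    and dL: "\<forall>p\<in>{a..b} \<times> UNIV. (L has_derivative blinfun_apply (L' p)) (at p within {a..b} \<times> UNIV)"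
    and dL': "\<forall>p\<in>{a..b} \<times> UNIV. (L' has_derivative blinfun_apply (L'' p)) (at p within {a..b} \<times> UNIV)"
    and tau: "C1_within ({a..b} \<times> UNIV) tau" and zl: "C1_within ({a..b} \<times> UNIV) zl"
    and zh: "C1_within ({a..b} \<times> UNIV) zh"
    and u: "C2_within {a..b} u" and v: "C2_within {a..b} v"
    and EL: "EL_at a b L u v" and t: "t \<in> {a..b}"
  shows "(noether_C a b L tau zl zh u v has_real_derivative
            L' (q t) (T t, Zl t, Zh t, dotx a b Zl t - dotx a b u t * dotx a b T t,
                      dotx a b Zh t - dotx a b v t * dotx a b T t)
            + L (q t) * dotx a b T t) (at t within {a..b})"
proof -
  define u1 v1 T1 Zl1 Zh1 where "u1 = dotx a b u" and "v1 = dotx a b v" and "T1 = dotx a b T"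
    and "Zl1 = dotx a b Zl" and "Zh1 = dotx a b Zh"
  obtain u2 v2 where du1: "\<forall>s\<in>{a..b}. (u1 has_real_derivative u2 s) (at s within {a..b})"
    and dv1: "\<forall>s\<in>{a..b}. (v1 has_real_derivative v2 s) (at s within {a..b})"
    and dq': "\<And>s. s \<in> {a..b} \<Longrightarrow>
      (q has_vector_derivative (1, u1 s, v1 s, u2 s, v2 s)) (at s within {a..b})"
    using C2_within_Icc_jet_derivative[OF ab u v] unfolding q_def u1_def v1_def by blast
  have dq: "(q has_vector_derivative (1, u1 t, v1 t, u2 t, v2 t)) (at t within {a..b})"
    by (rule dq'[OF t])
  have qs: "q s \<in> {a..b} \<times> UNIV" if "s \<in> {a..b}" for s using that unfolding q_def by auto
  then have qS: "q ` {a..b} \<subseteq> {a..b} \<times> UNIV" by blast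
  have dF: "((\<lambda>s. L (q s)) has_real_derivative L' (q t) (1, u1 t, v1 t, u2 t, v2 t))
      (at t within {a..b})"
    using has_real_derivative_compose_blinfun[OF dL[rule_format] qS dq] qS t by blast
  have "has_continuous_derivative_on {a..b} u u1" "has_continuous_derivative_on {a..b} v v1"
    unfolding u1_def v1_def
    using C1_within_Icc_has_continuous_derivative[OF ab] C2_within_imp_C1_within u v by blast+
  from C1_within_compose_graph[OF ab _ this] tau zl zh t
  have dT: "(T has_real_derivative T1 t) (at t within {a..b})"
    and dZl: "(Zl has_real_derivative Zl1 t) (at t within {a..b})"
    and dZh: "(Zh has_real_derivative Zh1 t) (at t within {a..b})"
    unfolding T_def Zl_def Zh_def T1_def Zl1_def Zh1_def has_continuous_derivative_on_def by blast+
  have dP: "((\<lambda>s. pd4 L (q s)) has_real_derivative pd2 L (q t)) (at t within {a..b})"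
    "((\<lambda>s. pd5 L (q s)) has_real_derivative pd3 L (q t)) (at t within {a..b})"
    using euler_lagrange_momentum_derivative[OF ab dL dL' dq[unfolded q_def] EL t] unfolding q_def .
  have "((\<lambda>s. pd4 L (q s) * Zl s + pd5 L (q s) * Zh s
            + (L (q s) - pd4 L (q s) * u1 s - pd5 L (q s) * v1 s) * T s) has_real_derivative
         pd2 L (q t) * Zl t + Zl1 t * pd4 L (q t) + (pd3 L (q t) * Zh t + Zh1 t * pd5 L (q t))
         + ((L' (q t) (1, u1 t, v1 t, u2 t, v2 t) - (pd2 L (q t) * u1 t + u2 t * pd4 L (q t))
              - (pd3 L (q t) * v1 t + v2 t * pd5 L (q t))) * T t
            + T1 t * (L (q t) - pd4 L (q t) * u1 t - pd5 L (q t) * v1 t))) (at t within {a..b})"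
    (is "(?C has_real_derivative ?E) _")
    using du1 dv1 t by (intro DERIV_add DERIV_diff DERIV_mult dP dZl dZh dF dT) auto
  moreover have "noether_C a b L tau zl zh u v = ?C"
    unfolding noether_C_def q_def T_def Zl_def Zh_def u1_def v1_def Let_def by simp
  moreover have "?E = L' (q t) (T t, Zl t, Zh t, Zl1 t - u1 t * T1 t, Zh1 t - v1 t * T1 t)
                      + L (q t) * T1 t"
    using pd_eq_blinfun_apply[OF dL[rule_format, OF qs[OF t]] qs[OF t]]
    by (intro noether_derivative_identity)
  ultimately show ?thesis unfolding u1_def v1_def T1_def Zl1_def Zh1_def by simp
qed

lemma derivative_zero_on_interior_Icc:
  fixes f E :: "real \<Rightarrow> real"
  assumes df: "\<And>t. t \<in> {a..b} \<Longrightarrow> (f has_real_derivative E t) (at t within {a..b})"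
    and E: "\<And>t. a < t \<Longrightarrow> t < b \<Longrightarrow> E t = 0" and x: "x \<in> {a..b}"
  shows "(f has_real_derivative 0) (at x within {a..b})"
proof -
  have dz: "(f has_derivative (\<lambda>h. 0)) (at y within {a..b})" if "y \<in> {a..b} - {a, b}" for y
  proof -
    have "(f has_real_derivative 0) (at y within {a..b})" using df[of y] E[of y] that by auto
    moreover have "(*) 0 = (\<lambda>_. 0 :: real)" by (intro ext) simp
    ultimately show ?thesis by (simp add: has_field_derivative_def)
  qed
  have cont: "continuous_on {a..b} f" using df by (rule DERIV_continuous_on)
  have const: "f y = f a" if "y \<in> {a..b}" for y
    by (rule has_derivative_zero_unique_strong_interval[where k="{a, b}", OF _ cont refl dz that])
       simp_all
  show ?thesis
    by (rule has_field_derivative_transform_within[OF DERIV_const[of "f a"] zero_less_one x])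
       (metis const)
qed

lemma noether_conserved:
  fixes L :: "R5 \<Rightarrow> real" and tau zl zh :: "R3 \<Rightarrow> real" and u v :: "real \<Rightarrow> real"
  assumes ab: "a < b" and L: "C2_within ({a..b} \<times> UNIV) L"
    and tau: "C1_within ({a..b} \<times> UNIV) tau" and zl: "C1_within ({a..b} \<times> UNIV) zl"
    and zh: "C1_within ({a..b} \<times> UNIV) zh"
    and u: "C2_within {a..b} u" and v: "C2_within {a..b} v"
    and Rx: "small_remainder a b Rx" and Rl: "small_remainder a b Rl" and Rh: "small_remainder a b Rh"
    and inv: "invariant_at a b L tau zl zh Rx Rl Rh u v"
    and EL: "EL_at a b L u v" and x: "x \<in> {a..b}"
  shows "(noether_C a b L tau zl zh u v has_real_derivative 0) (at x within {a..b})"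
proof -
  obtain L' where
    dL: "\<forall>p\<in>{a..b} \<times> UNIV. (L has_derivative blinfun_apply (L' p)) (at p within {a..b} \<times> UNIV)"
    and "C1_within ({a..b} \<times> UNIV) L'" using L unfolding C2_within_def by blast
  then obtain L'' where
    dL': "\<forall>p\<in>{a..b} \<times> UNIV. (L' has_derivative blinfun_apply (L'' p)) (at p within {a..b} \<times> UNIV)"
    unfolding C1_within_def by blast
  have "C1_within {a..b} u" "C1_within {a..b} v" using u v by (simp_all add: C2_within_imp_C1_within)
  note invariance_condition = infinitesimal_invariance[OF ab dL tau zl zh this Rx Rl Rh inv]
  show ?thesis
    by (rule derivative_zero_on_interior_Icc[OF
          noether_C_has_derivative[OF ab dL dL' tau zl zh u v EL] _ x])
       (assumption | rule invariance_condition)+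
qed

theorem mainTheorem3:
  fixes a b :: real
    and Ll Lh :: "real \<Rightarrow> R5 \<Rightarrow> real"
    and tau :: "R3 \<Rightarrow> real"
    and zl zh :: "real \<Rightarrow> R3 \<Rightarrow> real"
    and Rx Rl Rh :: "(real \<Rightarrow> real \<Rightarrow> real) \<Rightarrow> real \<Rightarrow> real \<Rightarrow> real \<Rightarrow> real"
  assumes ab: "a < b"
    and L_C2: "\<forall>r\<in>{0..1}. C2_within ({a..b} \<times> UNIV) (Ll r) \<and> C2_within ({a..b} \<times> UNIV) (Lh r)"
    and tau_C1: "C1_within ({a..b} \<times> UNIV) tau"
    and zeta_C1: "\<forall>r\<in>{0..1}. C1_within ({a..b} \<times> UNIV) (zl r) \<and> C1_within ({a..b} \<times> UNIV) (zh r)"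
    and remainders: "\<forall>q. fuzzy_C2_fun a b q \<longrightarrow> (\<forall>r\<in>{0..1}.
          small_remainder a b (Rx q r) \<and> small_remainder a b (Rl q r) \<and> small_remainder a b (Rh q r))"
    and invariance: "\<forall>q. fuzzy_C2_fun a b q \<longrightarrow> (\<forall>r\<in>{0..1}.
          invariant_at a b (Ll r) tau (zl r) (zh r) (Rx q r) (Rl q r) (Rh q r)
            (\<lambda>x. flower (q x) r) (\<lambda>x. fupper (q x) r) \<and>
          invariant_at a b (Lh r) tau (zl r) (zh r) (Rx q r) (Rl q r) (Rh q r)
            (\<lambda>x. flower (q x) r) (\<lambda>x. fupper (q x) r))"
  shows "\<forall>q. fuzzy_C2_fun a b q \<and>
           (\<forall>r\<in>{0..1}. EL_at a b (Ll r) (\<lambda>x. flower (q x) r) (\<lambda>x. fupper (q x) r) \<and>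
                        EL_at a b (Lh r) (\<lambda>x. flower (q x) r) (\<lambda>x. fupper (q x) r))
         \<longrightarrow> (\<forall>r\<in>{0..1}. \<forall>x\<in>{a..b}.
               ((noether_C a b (Ll r) tau (zl r) (zh r) (\<lambda>x. flower (q x) r) (\<lambda>x. fupper (q x) r))
                  has_real_derivative 0) (at x within {a..b}) \<and>
               ((noether_C a b (Lh r) tau (zl r) (zh r) (\<lambda>x. flower (q x) r) (\<lambda>x. fupper (q x) r))
                  has_real_derivative 0) (at x within {a..b}))"
proof -
  have "(noether_C a b L tau (zl r) (zh r) (\<lambda>x. flower (q x) r) (\<lambda>x. fupper (q x) r)
           has_real_derivative 0) (at x within {a..b})"
    if L: "L \<in> {Ll r, Lh r}" and q: "fuzzy_C2_fun a b q" and r: "r \<in> {0..1}" and x: "x \<in> {a..b}"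
      and EL: "EL_at a b L (\<lambda>x. flower (q x) r) (\<lambda>x. fupper (q x) r)" for L q r x
  proof (rule noether_conserved[where Rx="Rx q r" and Rl="Rl q r" and Rh="Rh q r",
        OF ab _ tau_C1 _ _ _ _ _ _ _ _ EL x])
    show "C2_within {a..b} (\<lambda>x. flower (q x) r)" "C2_within {a..b} (\<lambda>x. fupper (q x) r)"
      using q r unfolding fuzzy_C2_fun_def by auto
  qed (use L L_C2 zeta_C1 remainders invariance q r in auto)
  then show ?thesis by blast
qed

end
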